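(* Let $\mathcal{U}$ be a UEC-representative and let $\mathcal{D}$ be a maximal DAG in the UEC of $\mathcal{U}$. Then for nodes $v,x,w$, the path $(v,x,w)$ is a v-structure $v\to x\leftarrow w$ in $\mathcal{D}$ if and only if there exist cliques $C_1,C_2\in\mathcal{E}^\mathcal{U}$ with $v,x\in C_1$, $w\notin C_1$, $w,x\in C_2$, $v\notin C_2$, and every clique in $\mathcal{E}^\mathcal{U}$ containing $v$ or $w$ also contains $x$.
   Context: For a DAG $\mathcal{D}$, a trek is a path with no repeated vertices and no collider; the unconditional dependence graph $\mathcal{U}^\mathcal{D}$ has an edge between distinct $v,w$ iff there is a trek between them. A UEC-representative is an undirected graph $\mathcal{U}$ with $\mathcal{U}=\mathcal{U}^\mathcal{D}$ for some DAG $\mathcal{D}$ on the same vertex set; the UEC of $\mathcal{U}$ is $\{\mathcal{D}:\mathcal{U}^\mathcal{D}=\mathcal{U}\}$. A DAG $\mathcal{D}$ in this UEC is maximal if every DAG obtained from $\mathcal{D}$ by adding one edge is not in the UEC. An edge clique cover is a collection of cliques covering every vertex and edge; $\mathcal{E}^\mathcal{U}$ denotes the unique minimum-cardinality edge clique cover of the UEC-representative $\mathcal{U}$ (it equals $\{\mathrm{ne}_\mathcal{U}[m]:m\in M\}$ for any maximum independent set $M$, with $\mathrm{ne}_\mathcal{U}[m]$ the closed neighborhood). A v-structure is $v\to x\leftarrow w$ with $v,w$ nonadjacent. *)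

theory Defs
  imports Main
begin

text \<open>Graphs on an explicit finite vertex set V. A directed graph is an edge
relation D (pairs (a,b) meaning a -> b); an undirected graph is a symmetric
relation U.\<close>

definition is_dag :: "'a set \<Rightarrow> 'a rel \<Rightarrow> bool" where
  "is_dag V D \<longleftrightarrow> finite V \<and> D \<subseteq> V \<times> V \<and> acyclic D"

definition adjD :: "'a rel \<Rightarrow> 'a \<Rightarrow> 'a \<Rightarrow> bool" where
  "adjD D a b \<longleftrightarrow> (a, b) \<in> D \<or> (b, a) \<in> D"

definition is_trek :: "'a rel \<Rightarrow> 'a list \<Rightarrow> bool" where
  "is_trek D p \<longleftrightarrow> p \<noteq> [] \<and> distinct p
     \<and> (\<forall>i. Suc i < length p \<longrightarrow> adjD D (p ! i) (p ! Suc i))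
     \<and> (\<forall>i. Suc (Suc i) < length p \<longrightarrow>
            \<not> ((p ! i, p ! Suc i) \<in> D \<and> (p ! Suc (Suc i), p ! Suc i) \<in> D))"

definition trek_between :: "'a rel \<Rightarrow> 'a \<Rightarrow> 'a \<Rightarrow> bool" where
  "trek_between D v w \<longleftrightarrow> (\<exists>p. is_trek D p \<and> hd p = v \<and> last p = w)"

definition udg :: "'a set \<Rightarrow> 'a rel \<Rightarrow> 'a rel" where
  "udg V D = {(v, w). v \<in> V \<and> w \<in> V \<and> v \<noteq> w \<and> trek_between D v w}"

definition uec_rep :: "'a set \<Rightarrow> 'a rel \<Rightarrow> bool" where
  "uec_rep V U \<longleftrightarrow> (\<exists>D. is_dag V D \<and> udg V D = U)"

definition in_uec :: "'a set \<Rightarrow> 'a rel \<Rightarrow> 'a rel \<Rightarrow> bool" where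
  "in_uec V U D \<longleftrightarrow> is_dag V D \<and> udg V D = U"

definition maximal_in_uec :: "'a set \<Rightarrow> 'a rel \<Rightarrow> 'a rel \<Rightarrow> bool" where
  "maximal_in_uec V U D \<longleftrightarrow> in_uec V U D \<and>
     (\<forall>a b. a \<in> V \<longrightarrow> b \<in> V \<longrightarrow> a \<noteq> b \<longrightarrow> (a, b) \<notin> D \<longrightarrow>
        is_dag V (insert (a, b) D) \<longrightarrow> \<not> in_uec V U (insert (a, b) D))"

definition is_clique :: "'a set \<Rightarrow> 'a rel \<Rightarrow> 'a set \<Rightarrow> bool" where
  "is_clique V U C \<longleftrightarrow> C \<subseteq> V \<and> (\<forall>a\<in>C. \<forall>b\<in>C. a \<noteq> b \<longrightarrow> (a, b) \<in> U)"

definition edge_clique_cover :: "'a set \<Rightarrow> 'a rel \<Rightarrow> 'a set set \<Rightarrow> bool" where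
  "edge_clique_cover V U E \<longleftrightarrow> (\<forall>C\<in>E. is_clique V U C)
     \<and> (\<forall>v\<in>V. \<exists>C\<in>E. v \<in> C)
     \<and> (\<forall>(a, b)\<in>U. \<exists>C\<in>E. a \<in> C \<and> b \<in> C)"

definition min_edge_clique_cover :: "'a set \<Rightarrow> 'a rel \<Rightarrow> 'a set set \<Rightarrow> bool" where
  "min_edge_clique_cover V U E \<longleftrightarrow> finite E \<and> edge_clique_cover V U E
     \<and> (\<forall>E'. finite E' \<longrightarrow> edge_clique_cover V U E' \<longrightarrow> card E \<le> card E')"

definition v_structure :: "'a rel \<Rightarrow> 'a \<Rightarrow> 'a \<Rightarrow> 'a \<Rightarrow> bool" where
  "v_structure D v x w \<longleftrightarrow> v \<noteq> w \<and> (v, x) \<in> D \<and> (w, x) \<in> D \<and> \<not> adjD D v w"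

end

theory Submission
  imports Defs
begin

text \<open>In a DAG a trek between two vertices exists iff they have a common ancestor, so
  \<open>U\<^sup>D\<close> joins two vertices iff some source of \<open>D\<close> reaches both. Consequently the
  descendant sets of the sources are cliques covering \<open>U\<^sup>D\<close>, and since no clique contains
  two sources they form the unique minimum edge clique cover. If every source reaching
  \<open>a\<close> also reaches \<open>b\<close> and \<open>b\<close> does not reach \<open>a\<close>, then adding \<open>a \<rightarrow> b\<close> keeps the
  graph acyclic and creates no new common ancestors, so in a maximal DAG that edge is
  already present. Hence in a maximal DAG two vertices are non-adjacent iff each is
  reached by a source missing the other, and \<open>v \<rightarrow> x\<close> is an edge iff \<open>x\<close> does not reach
  \<open>v\<close> and every source reaching \<open>v\<close> reaches \<open>x\<close>; read through the cover, this is the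
  claimed characterisation of v-structures.\<close>

definition collider_free_walk :: "'a rel \<Rightarrow> 'a list \<Rightarrow> bool" where
  "collider_free_walk D p \<longleftrightarrow>
     (\<forall>i. Suc i < length p \<longrightarrow> adjD D (p ! i) (p ! Suc i)) \<and>
     (\<forall>i. Suc (Suc i) < length p \<longrightarrow>
        \<not> ((p ! i, p ! Suc i) \<in> D \<and> (p ! Suc (Suc i), p ! Suc i) \<in> D))"

lemma is_trek_iff: "is_trek D p \<longleftrightarrow> p \<noteq> [] \<and> distinct p \<and> collider_free_walk D p"
  unfolding is_trek_def collider_free_walk_def by auto

lemma collider_free_walk_singleton [simp]: "collider_free_walk D [a]"
  by (simp add: collider_free_walk_def)

lemma collider_free_walk_Cons_Cons:
  "collider_free_walk D (a # b # r) \<longleftrightarrow>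
     adjD D a b \<and> (r \<noteq> [] \<longrightarrow> \<not> ((a, b) \<in> D \<and> (hd r, b) \<in> D)) \<and> collider_free_walk D (b # r)"
proof -
  have split: "(\<forall>i::nat. Q i) \<longleftrightarrow> Q 0 \<and> (\<forall>i. Q (Suc i))" for Q
    by (metis not0_implies_Suc)
  show ?thesis
    unfolding collider_free_walk_def by (subst (1 2) split) (cases r; auto)
qed

lemma collider_free_walk_suffix:
  "collider_free_walk D (xs @ ys) \<Longrightarrow> ys \<noteq> [] \<Longrightarrow> collider_free_walk D ys"
proof (induction xs)
  case (Cons x xs)
  then show ?case
    by (cases "xs @ ys") (auto simp: collider_free_walk_Cons_Cons)
qed simp

lemma collider_free_walk_prefix:
  "collider_free_walk D (xs @ ys) \<Longrightarrow> xs \<noteq> [] \<Longrightarrow> collider_free_walk D xs"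
proof (induction xs rule: induct_list012)
  case (3 x y zs)
  then show ?case by (cases zs) (auto simp: collider_free_walk_Cons_Cons)
qed auto

lemma collider_free_walk_snoc:
  "collider_free_walk D p \<Longrightarrow> p \<noteq> [] \<Longrightarrow> (last p, e) \<in> D \<Longrightarrow> (e, last p) \<notin> D \<Longrightarrow>
    collider_free_walk D (p @ [e])"
proof (induction p rule: induct_list012)
  case (3 x y zs)
  then show ?case by (cases zs) (auto simp: collider_free_walk_Cons_Cons)
qed (auto simp: collider_free_walk_Cons_Cons adjD_def)

lemma collider_free_walk_Cons:
  assumes "collider_free_walk D p" "p \<noteq> []" "(hd p, y) \<in> D" "(y, hd p) \<notin> D"
  shows "collider_free_walk D (y # p)"
  using assms by (cases p) (auto simp: collider_free_walk_Cons_Cons adjD_def)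

lemma acyclic_edge_asym: "acyclic D \<Longrightarrow> (a, b) \<in> D \<Longrightarrow> (b, a) \<notin> D"
  by (meson acyclic_def r_into_trancl trancl_into_trancl)

lemma trek_between_refl: "trek_between D a a"
  unfolding trek_between_def by (rule exI[of _ "[a]"]) (simp add: is_trek_iff)

text \<open>A trek ending in \<open>d\<close> extends along a directed path from \<open>d\<close>; if the path
  revisits the trek, the trek is cut at the first repetition instead.\<close>

lemma trek_between_extend_last:
  assumes "(d, e) \<in> D\<^sup>*" "acyclic D" "trek_between D a d"
  shows "trek_between D a e"
  using assms
proof (induction rule: rtrancl_induct)
  case (step y e)
  then obtain p where p: "is_trek D p" "hd p = a" "last p = y"
    unfolding trek_between_def by blast
  show ?case
  proof (cases "e \<in> set p")
    case True
    then obtain xs ys where split: "p = xs @ e # ys" by (meson split_list)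
    have "is_trek D (xs @ [e])"
      using p(1) collider_free_walk_prefix[of D "xs @ [e]" ys] unfolding split is_trek_iff by auto
    moreover have "hd (xs @ [e]) = a" using p(2) split by (cases xs) auto
    ultimately show ?thesis unfolding trek_between_def by force
  next
    case False
    have "is_trek D (p @ [e])"
      using p step False collider_free_walk_snoc[of D p e] acyclic_edge_asym[of D y e]
      unfolding is_trek_iff by auto
    moreover have "hd (p @ [e]) = a" using p by (auto simp: is_trek_iff)
    ultimately show ?thesis unfolding trek_between_def by force
  qed
qed

lemma trek_between_extend_hd:
  assumes "(c, a) \<in> D\<^sup>*" "acyclic D" "trek_between D c b"
  shows "trek_between D a b"
  using assms
proof (induction rule: rtrancl_induct)
  case (step y e)
  then obtain p where p: "is_trek D p" "hd p = y" "last p = b"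
    unfolding trek_between_def by blast
  show ?case
  proof (cases "e \<in> set p")
    case True
    then obtain xs ys where split: "p = xs @ e # ys" by (meson split_list)
    have "is_trek D (e # ys)"
      using p(1) collider_free_walk_suffix[of D xs "e # ys"] unfolding split is_trek_iff by auto
    moreover have "last (e # ys) = b" using p(3) split by simp
    ultimately show ?thesis unfolding trek_between_def by force
  next
    case False
    have "is_trek D (e # p)"
      using p step False collider_free_walk_Cons[of D p e] acyclic_edge_asym[of D y e]
      unfolding is_trek_iff by auto
    moreover have "last (e # p) = b" using p by (auto simp: is_trek_iff)
    ultimately show ?thesis unfolding trek_between_def by force
  qed
qed

text \<open>The second conjunct is the induction invariant: a collider-free walk entered by an
  edge pointing into its first vertex must be directed all the way to its end.\<close>

lemma collider_free_walk_common_ancestor: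
  "collider_free_walk D p \<Longrightarrow> p \<noteq> [] \<Longrightarrow>
     (\<exists>c. (c, hd p) \<in> D\<^sup>* \<and> (c, last p) \<in> D\<^sup>*) \<and>
     (\<forall>y. (y, hd p) \<in> D \<longrightarrow> collider_free_walk D (y # p) \<longrightarrow> (hd p, last p) \<in> D\<^sup>*)"
proof (induction p rule: induct_list012)
  case (3 x y zs)
  have walk: "adjD D x y" "zs \<noteq> [] \<longrightarrow> \<not> ((x, y) \<in> D \<and> (hd zs, y) \<in> D)"
    "collider_free_walk D (y # zs)"
    using "3.prems" by (auto simp: collider_free_walk_Cons_Cons)
  have IH: "\<exists>c. (c, y) \<in> D\<^sup>* \<and> (c, last (y # zs)) \<in> D\<^sup>*"
    "\<forall>y'. (y', y) \<in> D \<longrightarrow> collider_free_walk D (y' # y # zs) \<longrightarrow> (y, last (y # zs)) \<in> D\<^sup>*"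
    using "3.IH"(2) walk(3) by simp_all
  show ?case
  proof (cases "(x, y) \<in> D")
    case True
    then have "(x, last (x # y # zs)) \<in> D\<^sup>*"
      using IH(2) "3.prems"(1) by (auto intro: converse_rtrancl_into_rtrancl)
    then show ?thesis by auto
  next
    case False
    then have yx: "(y, x) \<in> D" using walk(1) by (auto simp: adjD_def)
    then have "\<exists>c. (c, x) \<in> D\<^sup>* \<and> (c, last (x # y # zs)) \<in> D\<^sup>*"
      using IH(1) by (auto intro: rtrancl_into_rtrancl)
    moreover have "\<not> collider_free_walk D (y' # x # y # zs)" if "(y', x) \<in> D" for y'
      using yx that by (auto simp: collider_free_walk_Cons_Cons)
    ultimately show ?thesis by auto
  qed
qed auto

lemma trek_between_iff_common_ancestor:
  assumes "acyclic D"
  shows "trek_between D a b \<longleftrightarrow> (\<exists>c. (c, a) \<in> D\<^sup>* \<and> (c, b) \<in> D\<^sup>*)"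
proof
  assume "trek_between D a b"
  then obtain p where "is_trek D p" "hd p = a" "last p = b"
    unfolding trek_between_def by blast
  then show "\<exists>c. (c, a) \<in> D\<^sup>* \<and> (c, b) \<in> D\<^sup>*"
    using collider_free_walk_common_ancestor[of D p] by (auto simp: is_trek_iff)
next
  assume "\<exists>c. (c, a) \<in> D\<^sup>* \<and> (c, b) \<in> D\<^sup>*"
  then obtain c where c: "(c, a) \<in> D\<^sup>*" "(c, b) \<in> D\<^sup>*" by blast
  have "trek_between D c b" using trek_between_extend_last[OF c(2) assms trek_between_refl] .
  then show "trek_between D a b" using trek_between_extend_hd[OF c(1) assms] by blast
qed

definition sources :: "'a set \<Rightarrow> 'a rel \<Rightarrow> 'a set" where
  "sources V D = {s \<in> V. \<forall>z. (z, s) \<notin> D}"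

definition descendants :: "'a set \<Rightarrow> 'a rel \<Rightarrow> 'a \<Rightarrow> 'a set" where
  "descendants V D s = {v \<in> V. (s, v) \<in> D\<^sup>*}"

lemma mem_descendants [simp]: "v \<in> descendants V D s \<longleftrightarrow> v \<in> V \<and> (s, v) \<in> D\<^sup>*"
  by (simp add: descendants_def)

lemma is_dag_ancestor_in_vertices:
  assumes "is_dag V D" "(s, v) \<in> D\<^sup>*" "v \<in> V"
  shows "s \<in> V"
  using assms(2,3) assms(1)[unfolded is_dag_def] by (induction rule: converse_rtrancl_induct) auto

lemma source_ancestor_eq: "s \<in> sources V D \<Longrightarrow> (c, s) \<in> D\<^sup>* \<Longrightarrow> c = s"
  unfolding sources_def by (auto elim: rtranclE)

lemma exists_source_ancestor:
  assumes dag: "is_dag V D" and "v \<in> V"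
  shows "\<exists>s\<in>sources V D. (s, v) \<in> D\<^sup>*"
proof -
  have "finite D" using dag finite_subset[of D "V \<times> V"] unfolding is_dag_def by auto
  then have "wf D" using dag finite_acyclic_wf unfolding is_dag_def by blast
  then obtain s where s: "s \<in> {s. (s, v) \<in> D\<^sup>*}" "\<And>z. (z, s) \<in> D \<Longrightarrow> z \<notin> {s. (s, v) \<in> D\<^sup>*}"
    using wfE_min[of D v "{s. (s, v) \<in> D\<^sup>*}"] by blast
  have "(z, s) \<notin> D" for z
    using s by (auto intro: converse_rtrancl_into_rtrancl)
  moreover have "s \<in> V" using is_dag_ancestor_in_vertices[OF dag] s(1) \<open>v \<in> V\<close> by blast
  ultimately show ?thesis using s(1) unfolding sources_def by blast
qed

lemma udg_iff_common_source:
  assumes dag: "is_dag V D"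
  shows "(p, q) \<in> udg V D \<longleftrightarrow>
    p \<in> V \<and> q \<in> V \<and> p \<noteq> q \<and> (\<exists>s\<in>sources V D. (s, p) \<in> D\<^sup>* \<and> (s, q) \<in> D\<^sup>*)"
proof -
  have "(\<exists>c. (c, p) \<in> D\<^sup>* \<and> (c, q) \<in> D\<^sup>*) \<longleftrightarrow> (\<exists>s\<in>sources V D. (s, p) \<in> D\<^sup>* \<and> (s, q) \<in> D\<^sup>*)"
    if "p \<in> V" for p q
    using exists_source_ancestor[OF dag] is_dag_ancestor_in_vertices[OF dag _ that]
    by (meson rtrancl_trans)
  moreover have "acyclic D" using dag unfolding is_dag_def by blast
  ultimately show ?thesis
    unfolding udg_def by (auto simp: trek_between_iff_common_ancestor)
qed

text \<open>Every common ancestor created by the new edge lies above \<open>a\<close>, and a source of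
  \<open>D\<close> above it also reaches \<open>b\<close>.\<close>

lemma udg_insert_edge:
  assumes dag: "is_dag V D" and "a \<in> V" "b \<in> V" "(b, a) \<notin> D\<^sup>*"
    and sources_a_b: "\<forall>s\<in>sources V D. (s, a) \<in> D\<^sup>* \<longrightarrow> (s, b) \<in> D\<^sup>*"
  shows "is_dag V (insert (a, b) D)" "udg V (insert (a, b) D) = udg V D"
proof -
  let ?D' = "insert (a, b) D"
  show dag': "is_dag V ?D'" using assms(1-4) unfolding is_dag_def by auto
  have common: "(\<exists>c. (c, p) \<in> ?D'\<^sup>* \<and> (c, q) \<in> ?D'\<^sup>*) \<longleftrightarrow>
      (\<exists>s\<in>sources V D. (s, p) \<in> D\<^sup>* \<and> (s, q) \<in> D\<^sup>*)" if "p \<in> V" for p q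
  proof
    assume "\<exists>c. (c, p) \<in> ?D'\<^sup>* \<and> (c, q) \<in> ?D'\<^sup>*"
    then obtain c where c: "(c, p) \<in> ?D'\<^sup>*" "(c, q) \<in> ?D'\<^sup>*" by blast
    have "c \<in> V" using is_dag_ancestor_in_vertices[OF dag' c(1) \<open>p \<in> V\<close>] .
    then obtain s where s: "s \<in> sources V D" "(s, c) \<in> D\<^sup>*"
      using exists_source_ancestor[OF dag] by blast
    have "(s, y) \<in> D\<^sup>*" if "(c, y) \<in> ?D'\<^sup>*" for y
    proof -
      from that have "(c, y) \<in> D\<^sup>* \<or> (c, a) \<in> D\<^sup>* \<and> (b, y) \<in> D\<^sup>*"
        by (simp add: rtrancl_insert)
      then show ?thesis using s sources_a_b by (meson rtrancl_trans)
    qed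
    then show "\<exists>s\<in>sources V D. (s, p) \<in> D\<^sup>* \<and> (s, q) \<in> D\<^sup>*" using s(1) c by blast
  next
    have "D\<^sup>* \<subseteq> ?D'\<^sup>*" by (rule rtrancl_mono) blast
    then show "\<exists>s\<in>sources V D. (s, p) \<in> D\<^sup>* \<and> (s, q) \<in> D\<^sup>* \<Longrightarrow>
        \<exists>c. (c, p) \<in> ?D'\<^sup>* \<and> (c, q) \<in> ?D'\<^sup>*" by blast
  qed
  have "acyclic ?D'" using dag' unfolding is_dag_def by blast
  then have "(p, q) \<in> udg V ?D' \<longleftrightarrow>
      p \<in> V \<and> q \<in> V \<and> p \<noteq> q \<and> (\<exists>c. (c, p) \<in> ?D'\<^sup>* \<and> (c, q) \<in> ?D'\<^sup>*)" for p q
    unfolding udg_def by (simp add: trek_between_iff_common_ancestor)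
  then have "(p, q) \<in> udg V ?D' \<longleftrightarrow> (p, q) \<in> udg V D" for p q
    using common[of p q] udg_iff_common_source[OF dag, of p q] by blast
  then show "udg V ?D' = udg V D" by (meson subrelI subset_antisym)
qed

lemma edge_clique_cover_source_descendants:
  assumes dag: "is_dag V D"
  shows "edge_clique_cover V (udg V D) (descendants V D ` sources V D)"
proof -
  let ?S = "sources V D" and ?K = "descendants V D"
  have "is_clique V (udg V D) (?K s)" if "s \<in> ?S" for s
    using that unfolding is_clique_def udg_iff_common_source[OF dag] by auto
  moreover have "\<exists>C\<in>?K ` ?S. v \<in> C" if v: "v \<in> V" for v
  proof -
    obtain s where "s \<in> ?S" "(s, v) \<in> D\<^sup>*" using exists_source_ancestor[OF dag v] by blast
    with v show ?thesis by auto
  qed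
  moreover have "\<exists>C\<in>?K ` ?S. p \<in> C \<and> q \<in> C" if pq: "(p, q) \<in> udg V D" for p q
  proof -
    obtain s where "s \<in> ?S" "(s, p) \<in> D\<^sup>*" "(s, q) \<in> D\<^sup>*" "p \<in> V" "q \<in> V"
      using pq unfolding udg_iff_common_source[OF dag] by blast
    then show ?thesis by auto
  qed
  ultimately show ?thesis unfolding edge_clique_cover_def by auto
qed

lemma clique_through_source_subset:
  assumes dag: "is_dag V D" and C: "is_clique V (udg V D) C" and s: "s \<in> sources V D" "s \<in> C"
  shows "C \<subseteq> descendants V D s"
proof
  fix v assume v: "v \<in> C"
  have clique: "C \<subseteq> V" "\<And>a b. a \<in> C \<Longrightarrow> b \<in> C \<Longrightarrow> a \<noteq> b \<Longrightarrow> (a, b) \<in> udg V D"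
    using C unfolding is_clique_def by auto
  have "(s, v) \<in> D\<^sup>*"
  proof (cases "v = s")
    case False
    then obtain t where "t \<in> sources V D" "(t, s) \<in> D\<^sup>*" "(t, v) \<in> D\<^sup>*"
      using clique(2)[OF s(2) v] unfolding udg_iff_common_source[OF dag] by blast
    then show ?thesis using source_ancestor_eq[OF s(1)] by blast
  qed simp
  then show "v \<in> descendants V D s" using clique(1) v by auto
qed

text \<open>A clique through a source lies below that source, so no clique of a cover contains
  two sources: choosing a clique through each source is injective, and minimality forces
  the cover to consist of exactly these cliques.\<close>

lemma min_edge_clique_cover_eq_source_descendants:
  assumes dag: "is_dag V D" and min: "min_edge_clique_cover V (udg V D) E"
  shows "E = descendants V D ` sources V D"
proof -
  let ?S = "sources V D" and ?K = "descendants V D"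
  have fin: "finite E" and cov: "edge_clique_cover V (udg V D) E"
    and card_le: "card E \<le> card (?K ` ?S)"
    using min edge_clique_cover_source_descendants[OF dag] dag
    unfolding min_edge_clique_cover_def is_dag_def sources_def by auto
  have clique: "C \<in> E \<Longrightarrow> is_clique V (udg V D) C" for C
    using cov unfolding edge_clique_cover_def by blast
  have sub_K: "C \<in> E \<Longrightarrow> s \<in> ?S \<Longrightarrow> s \<in> C \<Longrightarrow> C \<subseteq> ?K s" for C s
    using clique_through_source_subset[OF dag clique] by blast
  have "\<forall>s\<in>?S. \<exists>C\<in>E. s \<in> C" using cov unfolding edge_clique_cover_def sources_def by blast
  then obtain Cf where Cf: "\<And>s. s \<in> ?S \<Longrightarrow> Cf s \<in> E \<and> s \<in> Cf s"
    using bchoice[of ?S "\<lambda>s C. C \<in> E \<and> s \<in> C"] by blast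
  have inj: "inj_on Cf ?S"
  proof (rule inj_onI)
    fix s t assume st: "s \<in> ?S" "t \<in> ?S" "Cf s = Cf t"
    then have "t \<in> ?K s" using Cf sub_K by (metis subsetD)
    then show "s = t" using source_ancestor_eq[OF st(2), of s] by simp
  qed
  have "Cf ` ?S \<subseteq> E" using Cf by blast
  moreover have "card E \<le> card (Cf ` ?S)"
    using card_le card_image_le[of ?S ?K] card_image[OF inj] fin dag
    unfolding is_dag_def sources_def by simp
  ultimately have E_Cf: "E = Cf ` ?S" using card_seteq[OF fin] by blast
  have "Cf s = ?K s" if s: "s \<in> ?S" for s
  proof
    show "Cf s \<subseteq> ?K s" using Cf sub_K s by blast
    show "?K s \<subseteq> Cf s"
    proof
      fix v assume v: "v \<in> ?K s"
      show "v \<in> Cf s"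
      proof (cases "v = s")
        case False
        moreover have "s \<in> V" using s by (simp add: sources_def)
        ultimately have "(s, v) \<in> udg V D"
          using s v unfolding udg_iff_common_source[OF dag] by auto
        then obtain C where C: "C \<in> E" "s \<in> C" "v \<in> C"
          using cov unfolding edge_clique_cover_def by blast
        then obtain t where t: "t \<in> ?S" "C = Cf t" using E_Cf by blast
        then have "s \<in> ?K t" using C Cf sub_K by blast
        then have "t = s" using source_ancestor_eq[OF s, of t] by simp
        then show ?thesis using C t by blast
      qed (use Cf s in blast)
    qed
  qed
  then have "Cf ` ?S = ?K ` ?S" by (rule image_cong[OF refl])
  with E_Cf show ?thesis by simp
qed

lemma maximal_in_uec_edge:
  assumes max: "maximal_in_uec V U D" and "a \<in> V" "b \<in> V" "(b, a) \<notin> D\<^sup>*"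
    and "\<forall>s\<in>sources V D. (s, a) \<in> D\<^sup>* \<longrightarrow> (s, b) \<in> D\<^sup>*"
  shows "(a, b) \<in> D"
proof (rule ccontr)
  assume "(a, b) \<notin> D"
  have dag: "is_dag V D" and U: "U = udg V D"
    using max unfolding maximal_in_uec_def in_uec_def by auto
  have "a \<noteq> b" using assms(4) by auto
  with udg_insert_edge[OF dag assms(2-5)] have "in_uec V U (insert (a, b) D)"
    and "is_dag V (insert (a, b) D)"
    unfolding in_uec_def U by auto
  with max assms(2,3) \<open>a \<noteq> b\<close> \<open>(a, b) \<notin> D\<close> show False
    unfolding maximal_in_uec_def by blast
qed

lemma maximal_in_uec_nonadjacent_source:
  assumes max: "maximal_in_uec V U D" and "a \<in> V" "b \<in> V" "a \<noteq> b" "\<not> adjD D a b"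
  shows "\<exists>s\<in>sources V D. (s, a) \<in> D\<^sup>* \<and> (s, b) \<notin> D\<^sup>*"
proof (rule ccontr)
  assume "\<not> ?thesis"
  then have a_b: "\<forall>s\<in>sources V D. (s, a) \<in> D\<^sup>* \<longrightarrow> (s, b) \<in> D\<^sup>*" by blast
  show False
  proof (cases "(b, a) \<in> D\<^sup>*")
    case False
    then show False
      using maximal_in_uec_edge[OF max assms(2,3) False a_b] assms(5) by (simp add: adjD_def)
  next
    case True
    have "acyclic D" using max unfolding maximal_in_uec_def in_uec_def is_dag_def by blast
    then have "(a, b) \<notin> D\<^sup>*"
      using True assms(4) acyclic_impl_antisym_rtrancl by (blast dest: antisymD)
    moreover have "\<forall>s\<in>sources V D. (s, b) \<in> D\<^sup>* \<longrightarrow> (s, a) \<in> D\<^sup>*"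
      using True by (meson rtrancl_trans)
    ultimately show False
      using maximal_in_uec_edge[OF max assms(3,2)] assms(5) by (simp add: adjD_def)
  qed
qed

lemma maximal_in_uec_v_structure_iff:
  assumes max: "maximal_in_uec V U D" and "v \<in> V" "x \<in> V" "w \<in> V"
  shows "v_structure D v x w \<longleftrightarrow>
    (\<exists>s\<in>sources V D. (s, v) \<in> D\<^sup>* \<and> (s, w) \<notin> D\<^sup>*) \<and>
    (\<exists>s\<in>sources V D. (s, w) \<in> D\<^sup>* \<and> (s, v) \<notin> D\<^sup>*) \<and>
    (\<forall>s\<in>sources V D. (s, v) \<in> D\<^sup>* \<or> (s, w) \<in> D\<^sup>* \<longrightarrow> (s, x) \<in> D\<^sup>*)"
    (is "_ \<longleftrightarrow> ?v_not_w \<and> ?w_not_v \<and> ?below_x")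
proof
  assume "v_structure D v x w"
  then have "v \<noteq> w" "\<not> adjD D v w" "\<not> adjD D w v" and vx: "(v, x) \<in> D" and wx: "(w, x) \<in> D"
    unfolding v_structure_def adjD_def by auto
  then have ?v_not_w ?w_not_v
    using maximal_in_uec_nonadjacent_source[OF max] assms(2,4) by auto
  moreover have ?below_x
    using vx wx by (auto intro: rtrancl_into_rtrancl)
  ultimately show "?v_not_w \<and> ?w_not_v \<and> ?below_x" by blast
next
  assume "?v_not_w \<and> ?w_not_v \<and> ?below_x"
  then obtain s1 s2 where s1: "s1 \<in> sources V D" "(s1, v) \<in> D\<^sup>*" "(s1, w) \<notin> D\<^sup>*"
    and s2: "s2 \<in> sources V D" "(s2, w) \<in> D\<^sup>*" "(s2, v) \<notin> D\<^sup>*"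
    and below_x: ?below_x
    by blast
  have "(s1, x) \<in> D\<^sup>*" "(s2, x) \<in> D\<^sup>*" using below_x s1 s2 by blast+
  then have "(x, v) \<notin> D\<^sup>*" "(x, w) \<notin> D\<^sup>*" using s1(3) s2(3) by (meson rtrancl_trans)+
  then have "(v, x) \<in> D" "(w, x) \<in> D"
    using maximal_in_uec_edge[OF max] below_x assms(2-4) by blast+
  moreover have "v \<noteq> w" "(v, w) \<notin> D" "(w, v) \<notin> D"
    using s1 s2 by (auto intro: rtrancl_into_rtrancl)
  ultimately show "v_structure D v x w" unfolding v_structure_def adjD_def by blast
qed

theorem lemma5p1:
  fixes V :: "'a set" and U D :: "'a rel" and E :: "'a set set"
  assumes "uec_rep V U"
    and "maximal_in_uec V U D"
    and "min_edge_clique_cover V U E"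
    and "v \<in> V" and "x \<in> V" and "w \<in> V"
  shows "v_structure D v x w \<longleftrightarrow>
    (\<exists>C1\<in>E. \<exists>C2\<in>E. v \<in> C1 \<and> x \<in> C1 \<and> w \<notin> C1 \<and> w \<in> C2 \<and> x \<in> C2 \<and> v \<notin> C2
       \<and> (\<forall>C\<in>E. (v \<in> C \<or> w \<in> C) \<longrightarrow> x \<in> C))"
proof -
  have dag: "is_dag V D" and U: "U = udg V D"
    using assms(2) unfolding maximal_in_uec_def in_uec_def by auto
  have E: "E = descendants V D ` sources V D"
    using min_edge_clique_cover_eq_source_descendants[OF dag] assms(3) U by simp
  show ?thesis
    unfolding maximal_in_uec_v_structure_iff[OF assms(2,4-6)] E
    using assms(4-6) by auto
qed

end
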